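(* Let $m\ge1$, $n\ge1$, $N>2n$. Let $\mathbf M_N$ be a symmetric positive definite $mN\times mN$ block-circulant matrix which is banded of bandwidth $n$, and let $\mathbf e=\{\mathbf e(t)\}_{t=1}^N$ be a stationary process on $\mathbb Z_N$ with covariance matrix $\mathbb E\,\mathbf e\mathbf e^\top=\mathbf M_N$. Then there is a unique process $\mathbf y$ solving $\mathbf M_N\mathbf y=\mathbf e$; it is a full rank stationary reciprocal process of order $n$ on $\mathbb Z_N$, it satisfies $\mathbb E\,\mathbf y\mathbf e^\top=I_{mN}$, and $\mathbf e$ is its normalized conjugate process, i.e. $\mathbf e(t)=\Delta^{-1}\mathbf d(t)$ where $\mathbf d(t)=\mathbf y(t)-\hat{\mathbb E}[\mathbf y(t)\mid\mathbf y(s),s\ne t]$ and $\Delta=\mathbb E\,\mathbf d(t)\mathbf d(t)^\top$.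
   Context: Processes are stacked as vectors in $\mathbb R^{mN}$, $\mathbf y=(\mathbf y(1)^\top,\dots,\mathbf y(N)^\top)^\top$. A matrix with $N\times N$ blocks of size $m\times m$ is block-circulant if its $(i,j)$ block depends only on $(i-j)\bmod N$, and banded of bandwidth $n$ if moreover its $(i,j)$ block is zero whenever $\min\{(i-j)\bmod N,(j-i)\bmod N\}>n$. A process on $\mathbb Z_N$ is a zero-mean second-order $\mathbb R^m$-valued process indexed by $t=1,\dots,N$ (indices mod $N$) whose covariance is symmetric block-circulant (it is then called stationary); full rank means positive definite covariance. $\hat{\mathbb E}[\cdot\mid\cdot]$ is orthogonal projection onto the closed linear span of the scalar components of the conditioning variables. Subspaces $\mathcal A,\mathcal B$ are conditionally orthogonal given $\mathcal C$ if $a-\hat{\mathbb E}[a\mid\mathcal C]$ and $b-\hat{\mathbb E}[b\mid\mathcal C]$ are uncorrelated for all $a\in\mathcal A,b\in\mathcal B$. The process is reciprocal of order $n$ if for every cyclic interval $(t_1,t_2)$ the variables $\{\mathbf y(t):t\in(t_1,t_2)\}$ are conditionally orthogonal to $\{\mathbf y(s):s\notin(t_1,t_2)\}$ given $\mathbf y(t_1-n+1),\dots,\mathbf y(t_1),\mathbf y(t_2),\dots,\mathbf y(t_2+n-1)$. *)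

theory Defs
  imports "HOL-Analysis.Analysis"
begin

text \<open>
  Zero-mean second-order scalar random variables are modelled as elements of a
  real inner product space 'h (an abstract L2 space), with covariance E[a b] = inner a b.
  Time indices of Z_N are 0..N-1 (the paper's 1..N shifted, arithmetic mod N); components are
  0..m-1.  An R^m-valued process on Z_N is a map x :: nat => nat => 'h, x t i being the i-th
  scalar component of x(t).
\<close>

definition stack :: "nat \<Rightarrow> (nat \<Rightarrow> nat \<Rightarrow> 'h) \<Rightarrow> nat \<Rightarrow> 'h" where
  "stack m x k = x (k div m) (k mod m)"

definition cross_cov :: "nat \<Rightarrow> (nat \<Rightarrow> nat \<Rightarrow> 'h::real_inner) \<Rightarrow> (nat \<Rightarrow> nat \<Rightarrow> 'h) \<Rightarrow> nat \<Rightarrow> nat \<Rightarrow> real" where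
  "cross_cov m x z k l = inner (stack m x k) (stack m z l)"

definition cov :: "nat \<Rightarrow> (nat \<Rightarrow> nat \<Rightarrow> 'h::real_inner) \<Rightarrow> nat \<Rightarrow> nat \<Rightarrow> real" where
  "cov m x = cross_cov m x x"

definition symmetric_mat :: "nat \<Rightarrow> (nat \<Rightarrow> nat \<Rightarrow> real) \<Rightarrow> bool" where
  "symmetric_mat d A \<longleftrightarrow> (\<forall>k<d. \<forall>l<d. A k l = A l k)"

definition pos_def_mat :: "nat \<Rightarrow> (nat \<Rightarrow> nat \<Rightarrow> real) \<Rightarrow> bool" where
  "pos_def_mat d A \<longleftrightarrow>
     (\<forall>x::nat \<Rightarrow> real. (\<exists>k<d. x k \<noteq> 0) \<longrightarrow> (\<Sum>k<d. \<Sum>l<d. x k * A k l * x l) > 0)"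

definition block_circulant :: "nat \<Rightarrow> nat \<Rightarrow> (nat \<Rightarrow> nat \<Rightarrow> real) \<Rightarrow> bool" where
  "block_circulant m N A \<longleftrightarrow>
     (\<forall>i<N. \<forall>j<N. \<forall>i'<N. \<forall>j'<N. (i + N - j) mod N = (i' + N - j') mod N \<longrightarrow>
        (\<forall>a<m. \<forall>b<m. A (i*m + a) (j*m + b) = A (i'*m + a) (j'*m + b)))"

definition banded :: "nat \<Rightarrow> nat \<Rightarrow> nat \<Rightarrow> (nat \<Rightarrow> nat \<Rightarrow> real) \<Rightarrow> bool" where
  "banded m N n A \<longleftrightarrow> block_circulant m N A \<and>
     (\<forall>i<N. \<forall>j<N. min ((i + N - j) mod N) ((j + N - i) mod N) > n \<longrightarrow>
        (\<forall>a<m. \<forall>b<m. A (i*m + a) (j*m + b) = 0))"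

definition stationary :: "nat \<Rightarrow> nat \<Rightarrow> (nat \<Rightarrow> nat \<Rightarrow> 'h::real_inner) \<Rightarrow> bool" where
  "stationary m N x \<longleftrightarrow> symmetric_mat (m*N) (cov m x) \<and> block_circulant m N (cov m x)"

definition full_rank :: "nat \<Rightarrow> nat \<Rightarrow> (nat \<Rightarrow> nat \<Rightarrow> 'h::real_inner) \<Rightarrow> bool" where
  "full_rank m N x \<longleftrightarrow> pos_def_mat (m*N) (cov m x)"

definition hatE :: "'h::real_inner \<Rightarrow> 'h set \<Rightarrow> 'h" where
  "hatE a S = (THE p. p \<in> closure (span S) \<and> (\<forall>b\<in>closure (span S). inner (a - p) b = 0))"

definition cond_orth :: "'h::real_inner set \<Rightarrow> 'h set \<Rightarrow> 'h set \<Rightarrow> bool" where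
  "cond_orth A B C \<longleftrightarrow>
     (\<forall>a\<in>closure (span A). \<forall>b\<in>closure (span B). inner (a - hatE a C) (b - hatE b C) = 0)"

definition comps :: "nat \<Rightarrow> (nat \<Rightarrow> nat \<Rightarrow> 'h) \<Rightarrow> nat set \<Rightarrow> 'h set" where
  "comps m x T = {x t i | t i. t \<in> T \<and> i < m}"

definition cyc_interval :: "nat \<Rightarrow> nat \<Rightarrow> nat \<Rightarrow> nat set" where
  "cyc_interval N t1 t2 = {(t1 + k) mod N | k. 0 < k \<and> k < (t2 + N - t1) mod N}"

text \<open>Boundary y(t1-n+1),...,y(t1), y(t2),...,y(t2+n-1).\<close>
definition cyc_boundary :: "nat \<Rightarrow> nat \<Rightarrow> nat \<Rightarrow> nat \<Rightarrow> nat set" where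
  "cyc_boundary N n t1 t2 =
     {(t1 + N * n - k) mod N | k. k < n} \<union> {(t2 + k) mod N | k. k < n}"

definition reciprocal :: "nat \<Rightarrow> nat \<Rightarrow> nat \<Rightarrow> (nat \<Rightarrow> nat \<Rightarrow> 'h::real_inner) \<Rightarrow> bool" where
  "reciprocal m N n x \<longleftrightarrow>
     (\<forall>t1<N. \<forall>t2<N.
        cond_orth (comps m x (cyc_interval N t1 t2))
                  (comps m x ({..<N} - cyc_interval N t1 t2))
                  (comps m x (cyc_boundary N n t1 t2)))"

definition solves :: "nat \<Rightarrow> nat \<Rightarrow> (nat \<Rightarrow> nat \<Rightarrow> real) \<Rightarrow> (nat \<Rightarrow> nat \<Rightarrow> 'h::real_vector)
                       \<Rightarrow> (nat \<Rightarrow> nat \<Rightarrow> 'h) \<Rightarrow> bool" where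
  "solves m N M y e \<longleftrightarrow> (\<forall>k<m*N. (\<Sum>l<m*N. M k l *\<^sub>R stack m y l) = stack m e k)"

definition conj_d :: "nat \<Rightarrow> nat \<Rightarrow> (nat \<Rightarrow> nat \<Rightarrow> 'h::real_inner) \<Rightarrow> nat \<Rightarrow> nat \<Rightarrow> 'h" where
  "conj_d m N y t i = y t i - hatE (y t i) (comps m y ({..<N} - {t}))"

definition inverse_pair :: "nat \<Rightarrow> (nat \<Rightarrow> nat \<Rightarrow> real) \<Rightarrow> (nat \<Rightarrow> nat \<Rightarrow> real) \<Rightarrow> bool" where
  "inverse_pair d A B \<longleftrightarrow>
     (\<forall>i<d. \<forall>j<d. (\<Sum>k<d. A i k * B k j) = (if i = j then 1 else 0)
                 \<and> (\<Sum>k<d. B i k * A k j) = (if i = j then 1 else 0))"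

definition normalized_conjugate :: "nat \<Rightarrow> nat \<Rightarrow> (nat \<Rightarrow> nat \<Rightarrow> 'h::real_inner)
                                    \<Rightarrow> (nat \<Rightarrow> nat \<Rightarrow> 'h) \<Rightarrow> bool" where
  "normalized_conjugate m N y e \<longleftrightarrow>
     (\<exists>Delta Dinv. inverse_pair m Delta Dinv \<and>
        (\<forall>t<N. (\<forall>i<m. \<forall>j<m. Delta i j = inner (conj_d m N y t i) (conj_d m N y t j)) \<and>
               (\<forall>i<m. e t i = (\<Sum>j<m. Dinv i j *\<^sub>R conj_d m N y t j))))"

end

theory Submission
  imports Defs "Jordan_Normal_Form.Determinant"
begin

(*
  Stack the processes as vectors E = e and Y = y in R^(mN).  The covariance of E is M, so
  Y = M^-1 E is the unique solution of M Y = E, and it is the dual basis of E: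
  E[Y_j E_k] = delta_jk, E = M Y and the covariance of Y is M^-1, which is positive definite and
  block circulant together with M.

  The key observation is that conditioning Y on a set B of its coordinates leaves residuals that
  are combinations of the dual variables E: if M has no entries between S - B and the coordinates
  outside S and B, the residual of any element of span Y_S lies in span E_(S - B).  For an interval
  S, its boundary B of width n and its complement T, bandedness of M gives exactly this, and the
  spaces span E_(S - B) and span E_(T - B) are orthogonal because E[E_u E_v] = M_uv = 0 when the
  blocks of u and v are more than n apart; this is reciprocity of order n.  Taking S = everything
  and B = all blocks but t, the residual of y(t) is M_0^-1 e(t), with M_0 the diagonal block of M,
  which identifies e as the normalized conjugate process.
*)

section \<open>Matrices on finite index sets\<close>

definition inverse_on :: "nat set \<Rightarrow> (nat \<Rightarrow> nat \<Rightarrow> real) \<Rightarrow> (nat \<Rightarrow> nat \<Rightarrow> real) \<Rightarrow> bool" where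
  "inverse_on U A B \<longleftrightarrow>
     (\<forall>i\<in>U. \<forall>j\<in>U. (\<Sum>k\<in>U. A i k * B k j) = (if i = j then 1 else 0)
                 \<and> (\<Sum>k\<in>U. B i k * A k j) = (if i = j then 1 else 0))"

definition pos_def_on :: "nat set \<Rightarrow> (nat \<Rightarrow> nat \<Rightarrow> real) \<Rightarrow> bool" where
  "pos_def_on U A \<longleftrightarrow> (\<forall>x. (\<exists>k\<in>U. x k \<noteq> 0) \<longrightarrow> (\<Sum>k\<in>U. \<Sum>l\<in>U. x k * A k l * x l) > 0)"

lemma inverse_pair_iff_inverse_on: "inverse_pair d A B \<longleftrightarrow> inverse_on {..<d} A B"
  unfolding inverse_pair_def inverse_on_def by auto

lemma pos_def_mat_iff_pos_def_on: "pos_def_mat d A \<longleftrightarrow> pos_def_on {..<d} A"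
  unfolding pos_def_mat_def pos_def_on_def by auto

lemma pos_def_on_subset:
  assumes "pos_def_on V A" "U \<subseteq> V" "finite V"
  shows "pos_def_on U A"
  unfolding pos_def_on_def
proof (intro allI impI)
  fix x :: "nat \<Rightarrow> real" assume "\<exists>k\<in>U. x k \<noteq> 0"
  define x' where "x' k = (if k \<in> U then x k else 0)" for k
  have "\<exists>k\<in>V. x' k \<noteq> 0"
    using \<open>\<exists>k\<in>U. x k \<noteq> 0\<close> assms(2) unfolding x'_def by auto
  then have "(\<Sum>k\<in>V. \<Sum>l\<in>V. x' k * A k l * x' l) > 0"
    using assms(1) unfolding pos_def_on_def by blast
  also have "(\<Sum>k\<in>V. \<Sum>l\<in>V. x' k * A k l * x' l) = (\<Sum>k\<in>U. \<Sum>l\<in>V. x' k * A k l * x' l)"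
    using assms(2,3) unfolding x'_def by (intro sum.mono_neutral_right) auto
  also have "\<dots> = (\<Sum>k\<in>U. \<Sum>l\<in>U. x' k * A k l * x' l)"
    using assms(2,3) unfolding x'_def by (intro sum.cong refl sum.mono_neutral_right) auto
  finally show "(\<Sum>k\<in>U. \<Sum>l\<in>U. x k * A k l * x l) > 0"
    unfolding x'_def by simp
qed

lemma ex_inverse_pair_if_kernel_trivial:
  fixes A :: "nat \<Rightarrow> nat \<Rightarrow> real"
  assumes kernel: "\<And>x. \<forall>i<d. (\<Sum>l<d. A i l * x l) = 0 \<Longrightarrow> \<forall>l<d. x l = 0"
  shows "\<exists>B. inverse_pair d A B"
proof -
  define A' where "A' = mat d d (\<lambda>(i,j). A i j)"
  have A': "A' \<in> carrier_mat d d" unfolding A'_def by simp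
  have "det A' \<noteq> 0"
  proof
    assume "det A' = 0"
    then obtain v where v: "v \<in> carrier_vec d" "v \<noteq> 0\<^sub>v d" "A' *\<^sub>v v = 0\<^sub>v d"
      using det_0_iff_vec_prod_zero_field[OF A'] by auto
    have "\<forall>i<d. (\<Sum>l<d. A i l * v $ l) = 0"
    proof (intro allI impI)
      fix i assume "i < d"
      then have "(A' *\<^sub>v v) $ i = 0" using v(3) by simp
      with \<open>i < d\<close> v(1) show "(\<Sum>l<d. A i l * v $ l) = 0"
        unfolding A'_def by (simp add: scalar_prod_def row_def atLeast0LessThan)
    qed
    then have "v = 0\<^sub>v d" using kernel v(1) by (intro eq_vecI) auto
    with v(2) show False ..
  qed
  then obtain B' where B': "B' \<in> carrier_mat d d" "B' * A' = 1\<^sub>m d" "A' * B' = 1\<^sub>m d"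
    using det_non_zero_imp_unit[OF A', of "()"] unfolding Units_def ring_mat_def by auto
  have "inverse_pair d A (\<lambda>i j. B' $$ (i,j))"
    unfolding inverse_pair_def
  proof (intro allI impI conjI)
    fix i j assume ij: "i < d" "j < d"
    have "(A' * B') $$ (i,j) = (if i = j then 1 else 0)" "(B' * A') $$ (i,j) = (if i = j then 1 else 0)"
      using B' ij by simp_all
    with ij B'(1) show "(\<Sum>k<d. A i k * B' $$ (k, j)) = (if i = j then 1 else 0)"
      "(\<Sum>k<d. B' $$ (i, k) * A k j) = (if i = j then 1 else 0)"
      unfolding A'_def by (simp_all add: scalar_prod_def row_def col_def atLeast0LessThan)
  qed
  then show ?thesis by blast
qed

lemma inverse_on_reindex:
  assumes h: "bij_betw h {..<n} U" and B: "inverse_pair n (\<lambda>i j. A (h i) (h j)) B"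
  shows "inverse_on U A (\<lambda>k l. B (inv_into {..<n} h k) (inv_into {..<n} h l))"
  unfolding inverse_on_def
proof (intro ballI conjI)
  let ?g = "inv_into {..<n} h"
  fix i j assume ij: "i \<in> U" "j \<in> U"
  have g: "?g i < n" "?g j < n" "h (?g i) = i" "h (?g j) = j"
    using ij bij_betw_inv_into_right[OF h] bij_betwE[OF bij_betw_inv_into[OF h]] by auto
  have ghk: "?g (h k) = k" if "k < n" for k
    using h that by (simp add: bij_betw_def inv_into_f_f)
  have eq: "(?g i = ?g j) = (i = j)" using g by metis
  have "(\<Sum>k\<in>U. A i k * B (?g k) (?g j)) = (\<Sum>k<n. A i (h k) * B (?g (h k)) (?g j))"
    by (rule sum.reindex_bij_betw[OF h, symmetric])
  also have "\<dots> = (\<Sum>k<n. A (h (?g i)) (h k) * B k (?g j))"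
    using g ghk by (intro sum.cong refl) simp
  also have "\<dots> = (if ?g i = ?g j then 1 else 0)"
    using B g(1,2) unfolding inverse_pair_def by blast
  finally show "(\<Sum>k\<in>U. A i k * B (?g k) (?g j)) = (if i = j then 1 else 0)"
    using eq by simp
  have "(\<Sum>k\<in>U. B (?g i) (?g k) * A k j) = (\<Sum>k<n. B (?g i) (?g (h k)) * A (h k) j)"
    by (rule sum.reindex_bij_betw[OF h, symmetric])
  also have "\<dots> = (\<Sum>k<n. B (?g i) k * A (h k) (h (?g j)))"
    using g ghk by (intro sum.cong refl) simp
  also have "\<dots> = (if ?g i = ?g j then 1 else 0)"
    using B g(1,2) unfolding inverse_pair_def by blast
  finally show "(\<Sum>k\<in>U. B (?g i) (?g k) * A k j) = (if i = j then 1 else 0)"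
    using eq by simp
qed

lemma pos_def_on_ex_inverse_on:
  assumes "finite U" "pos_def_on U A"
  shows "\<exists>B. inverse_on U A B"
proof -
  obtain h where h: "bij_betw h {..<card U} U"
    using ex_bij_betw_nat_finite[OF assms(1)] unfolding atLeast0LessThan by blast
  have "\<exists>B. inverse_pair (card U) (\<lambda>i j. A (h i) (h j)) B"
  proof (rule ex_inverse_pair_if_kernel_trivial)
    fix x assume x: "\<forall>i<card U. (\<Sum>l<card U. A (h i) (h l) * x l) = 0"
    define x' where "x' = x \<circ> inv_into {..<card U} h"
    have x'h: "x' (h k) = x k" if "k < card U" for k
      using h that unfolding x'_def by (simp add: bij_betw_def inv_into_f_f)
    have "(\<Sum>k\<in>U. \<Sum>l\<in>U. x' k * A k l * x' l) = (\<Sum>i<card U. \<Sum>l\<in>U. x' (h i) * A (h i) l * x' l)"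
      by (rule sum.reindex_bij_betw[OF h, symmetric])
    also have "\<dots> = (\<Sum>i<card U. \<Sum>l<card U. x' (h i) * A (h i) (h l) * x' (h l))"
      by (intro sum.cong refl sum.reindex_bij_betw[OF h, symmetric])
    also have "\<dots> = (\<Sum>i<card U. x i * (\<Sum>l<card U. A (h i) (h l) * x l))"
      by (intro sum.cong refl) (simp add: x'h sum_distrib_left mult.assoc)
    also have "\<dots> = 0" using x by simp
    finally have "\<not> (\<exists>k\<in>U. x' k \<noteq> 0)"
      using assms(2) unfolding pos_def_on_def by force
    then show "\<forall>l<card U. x l = 0"
      using x'h bij_betwE[OF h] by (metis lessThan_iff)
  qed
  then show ?thesis using inverse_on_reindex[OF h] by blast
qed

lemma pos_def_mat_ex_inverse_pair: "pos_def_mat d A \<Longrightarrow> \<exists>B. inverse_pair d A B"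
  using pos_def_on_ex_inverse_on[of "{..<d}" A]
  by (simp add: pos_def_mat_iff_pos_def_on inverse_pair_iff_inverse_on)

lemma inverse_pair_solve:
  fixes X F :: "nat \<Rightarrow> 'a::real_vector"
  assumes "inverse_pair d M Minv"
  shows "(\<forall>k<d. (\<Sum>l<d. M k l *\<^sub>R X l) = F k) \<longleftrightarrow> (\<forall>j<d. X j = (\<Sum>k<d. Minv j k *\<^sub>R F k))"
proof
  assume sol: "\<forall>k<d. (\<Sum>l<d. M k l *\<^sub>R X l) = F k"
  show "\<forall>j<d. X j = (\<Sum>k<d. Minv j k *\<^sub>R F k)"
  proof (intro allI impI)
    fix j assume "j < d"
    have "(\<Sum>k<d. Minv j k *\<^sub>R F k) = (\<Sum>k<d. Minv j k *\<^sub>R (\<Sum>l<d. M k l *\<^sub>R X l))"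
      using sol by simp
    also have "\<dots> = (\<Sum>l<d. (\<Sum>k<d. Minv j k * M k l) *\<^sub>R X l)"
      by (simp add: scaleR_sum_right scaleR_sum_left) (rule sum.swap)
    also have "\<dots> = X j"
      using assms \<open>j < d\<close> unfolding inverse_pair_def by (simp add: if_smult cong: if_cong)
    finally show "X j = (\<Sum>k<d. Minv j k *\<^sub>R F k)" ..
  qed
next
  assume sol: "\<forall>j<d. X j = (\<Sum>k<d. Minv j k *\<^sub>R F k)"
  show "\<forall>k<d. (\<Sum>l<d. M k l *\<^sub>R X l) = F k"
  proof (intro allI impI)
    fix k assume "k < d"
    have "(\<Sum>l<d. M k l *\<^sub>R X l) = (\<Sum>l<d. M k l *\<^sub>R (\<Sum>j<d. Minv l j *\<^sub>R F j))"
      using sol by simp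
    also have "\<dots> = (\<Sum>j<d. (\<Sum>l<d. M k l * Minv l j) *\<^sub>R F j)"
      by (simp add: scaleR_sum_right scaleR_sum_left) (rule sum.swap)
    also have "\<dots> = F k"
      using assms \<open>k < d\<close> unfolding inverse_pair_def by (simp add: if_smult cong: if_cong)
    finally show "(\<Sum>l<d. M k l *\<^sub>R X l) = F k" .
  qed
qed

lemma inverse_pair_unique:
  assumes "inverse_pair d A B"
    and right: "\<And>j l. j < d \<Longrightarrow> l < d \<Longrightarrow> (\<Sum>i<d. A j i * B' i l) = (if j = l then 1 else 0)"
    and "k < d" "l < d"
  shows "B' k l = B k l"
proof -
  have "\<forall>j<d. (\<Sum>i<d. A j i * B' i l) = (if j = l then 1 else 0)"
    using right assms(4) by simp
  then show ?thesis
    using inverse_pair_solve[OF assms(1), of "\<lambda>i. B' i l" "\<lambda>j. if j = l then 1 else 0"] assms(3,4)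
    by (simp add: if_distrib cong: if_cong)
qed

section \<open>Orthogonal projections\<close>

lemma inner_closure_span_eq_0:
  fixes v :: "'a::real_inner"
  assumes "\<And>s. s \<in> S \<Longrightarrow> inner v s = 0" and "b \<in> closure (span S)"
  shows "inner v b = 0"
proof -
  have "span S \<subseteq> {b. inner v b = 0}"
    using assms(1) by (intro span_minimal) (auto simp: subspace_def inner_add_right)
  moreover have "closed {b. inner v b = 0}"
    by (intro closed_Collect_eq continuous_intros)
  ultimately show ?thesis
    using assms(2) closure_minimal by blast
qed

lemma hatE_eqI:
  fixes a p :: "'a::real_inner"
  assumes p: "p \<in> span S" and orth: "\<And>s. s \<in> S \<Longrightarrow> inner (a - p) s = 0"
  shows "hatE a S = p"
  unfolding hatE_def
proof (rule the_equality)
  have p': "p \<in> closure (span S)" using p closure_subset by blast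
  then show "p \<in> closure (span S) \<and> (\<forall>b\<in>closure (span S). inner (a - p) b = 0)"
    using inner_closure_span_eq_0[OF orth] by blast
  fix q assume q: "q \<in> closure (span S) \<and> (\<forall>b\<in>closure (span S). inner (a - q) b = 0)"
  have "inner (a - q) p = 0" "inner (a - q) q = 0" "inner (a - p) p = 0" "inner (a - p) q = 0"
    using q p' inner_closure_span_eq_0[OF orth] by auto
  then have "inner (p - q) (p - q) = 0"
    by (simp add: inner_diff_left inner_diff_right inner_commute)
  then show "q = p" by simp
qed

lemma span_image_sum:
  fixes Y :: "'i \<Rightarrow> 'a::real_vector"
  assumes "finite S" and "a \<in> span (Y ` S)"
  shows "\<exists>\<alpha>. a = (\<Sum>k\<in>S. \<alpha> k *\<^sub>R Y k)"
  using assms(2)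
proof (induction rule: span_induct_alt)
  case base
  show ?case by (intro exI[of _ "\<lambda>_. 0"]) simp
next
  case (step c x y)
  then obtain j \<alpha> where j: "j \<in> S" "x = Y j" and y: "y = (\<Sum>k\<in>S. \<alpha> k *\<^sub>R Y k)" by blast
  have "c *\<^sub>R x + y = (\<Sum>k\<in>S. (if k = j then c else 0) *\<^sub>R Y k) + y"
    using assms(1) j by (simp add: if_smult cong: if_cong)
  also have "\<dots> = (\<Sum>k\<in>S. ((if k = j then c else 0) + \<alpha> k) *\<^sub>R Y k)"
    unfolding y by (simp add: scaleR_add_left sum.distrib)
  finally show ?case by (intro exI[where x = "\<lambda>k. (if k = j then c else 0) + \<alpha> k"])
qed

lemma closure_span_biorthogonal:
  fixes Y E :: "'i \<Rightarrow> 'a::real_inner"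
  assumes "finite S"
    and biorth: "\<And>j k. j \<in> S \<Longrightarrow> k \<in> S \<Longrightarrow> inner (Y j) (E k) = (if j = k then 1 else 0)"
  shows "closure (span (Y ` S)) = span (Y ` S)"
proof
  define P where "P a = (\<Sum>k\<in>S. inner a (E k) *\<^sub>R Y k)" for a
  have "P (x + y) = P x + P y" "P (c *\<^sub>R x) = c *\<^sub>R P x" for c x y
    unfolding P_def by (simp_all add: inner_add_left scaleR_add_left sum.distrib scaleR_sum_right)
  then have "subspace {a. P a = a}"
    unfolding subspace_def by (simp add: P_def)
  moreover have "P (Y j) = Y j" if "j \<in> S" for j
    using assms that by (simp add: P_def biorth if_smult cong: if_cong)
  ultimately have "span (Y ` S) \<subseteq> {a. P a = a}"
    by (intro span_minimal) auto
  moreover have "closed {a. P a = a}"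
    unfolding P_def by (intro closed_Collect_eq continuous_intros)
  ultimately have fixed: "closure (span (Y ` S)) \<subseteq> {a. P a = a}"
    by (rule closure_minimal)
  show "closure (span (Y ` S)) \<subseteq> span (Y ` S)"
  proof
    fix a assume "a \<in> closure (span (Y ` S))"
    then have "P a = a" using fixed by blast
    moreover have "P a \<in> span (Y ` S)"
      unfolding P_def by (intro span_sum span_scale span_base) auto
    ultimately show "a \<in> span (Y ` S)" by simp
  qed
qed (rule closure_subset)

section \<open>Dual systems\<close>

locale dual_system =
  fixes d :: nat and M :: "nat \<Rightarrow> nat \<Rightarrow> real" and Y E :: "nat \<Rightarrow> 'a::real_inner"
  assumes inner_Y_E: "\<And>j k. j < d \<Longrightarrow> k < d \<Longrightarrow> inner (Y j) (E k) = (if j = k then 1 else 0)"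
    and E_expansion: "\<And>k. k < d \<Longrightarrow> E k = (\<Sum>l<d. M k l *\<^sub>R Y l)"
begin

lemma inner_E_E: "k < d \<Longrightarrow> l < d \<Longrightarrow> inner (E k) (E l) = M k l"
  by (simp add: E_expansion[of k] inner_sum_left inner_Y_E if_distrib cong: if_cong)

lemma closure_span_Y:
  assumes "V \<subseteq> {..<d}"
  shows "closure (span (Y ` V)) = span (Y ` V)"
  using assms finite_subset[OF assms]
  by (intro closure_span_biorthogonal[where E = E]) (auto simp: inner_Y_E subset_eq)

lemma inner_dual_Y_eq_0:
  assumes "U \<subseteq> {..<d}" "b < d" "b \<notin> U"
  shows "inner (\<Sum>l\<in>U. G l *\<^sub>R E l) (Y b) = 0"
  using assms by (auto simp: inner_sum_left inner_commute[of "E _"] inner_Y_E intro!: sum.neutral)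

lemma Y_minus_dual_in_span:
  assumes "S \<subseteq> {..<d}"
    and band: "\<And>u j. u \<in> S - B \<Longrightarrow> j < d \<Longrightarrow> j \<notin> S \<union> B \<Longrightarrow> M u j = 0"
    and G: "\<And>u j. u \<in> S - B \<Longrightarrow> j \<in> S - B \<Longrightarrow> (\<Sum>l\<in>S - B. G u l * M l j) = (if u = j then 1 else 0)"
    and u: "u \<in> S - B"
  shows "Y u - (\<Sum>l\<in>S - B. G u l *\<^sub>R E l) \<in> span (Y ` B)"
proof -
  define c where "c j = (\<Sum>l\<in>S - B. G u l * M l j)" for j
  have ud: "u < d" using u assms(1) by auto
  have c: "c j *\<^sub>R Y j = (if j \<in> B then c j *\<^sub>R Y j else 0) + (if j = u then Y j else 0)"
    if "j < d" for j
  proof (cases "j \<in> B")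
    case False
    have "c j = (if u = j then 1 else 0)"
    proof (cases "j \<in> S")
      case True
      then show ?thesis using G[OF u] False unfolding c_def by simp
    next
      case False
      then show ?thesis using band \<open>j \<notin> B\<close> \<open>j < d\<close> u unfolding c_def by (auto intro!: sum.neutral)
    qed
    then show ?thesis using False by auto
  qed (use u in auto)
  have "(\<Sum>l\<in>S - B. G u l *\<^sub>R E l) = (\<Sum>l\<in>S - B. \<Sum>j<d. (G u l * M l j) *\<^sub>R Y j)"
    using assms(1) by (intro sum.cong refl) (auto simp: E_expansion scaleR_sum_right)
  also have "\<dots> = (\<Sum>j<d. c j *\<^sub>R Y j)"
    unfolding c_def by (subst sum.swap) (simp add: scaleR_sum_left)
  also have "\<dots> = (\<Sum>j<d. (if j \<in> B then c j *\<^sub>R Y j else 0) + (if j = u then Y j else 0))"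
    by (intro sum.cong refl) (rule c, simp)
  also have "\<dots> = (\<Sum>j<d. if j \<in> B then c j *\<^sub>R Y j else 0) + Y u"
    using ud by (simp add: sum.distrib)
  finally have "Y u - (\<Sum>l\<in>S - B. G u l *\<^sub>R E l) = - (\<Sum>j<d. if j \<in> B then c j *\<^sub>R Y j else 0)"
    by simp
  also have "\<dots> \<in> span (Y ` B)"
    by (intro span_neg span_sum) (auto intro: span_scale span_base span_zero)
  finally show ?thesis .
qed

lemma residual_in_span_E:
  assumes "S \<subseteq> {..<d}" "B \<subseteq> {..<d}"
    and band: "\<And>u j. u \<in> S - B \<Longrightarrow> j < d \<Longrightarrow> j \<notin> S \<union> B \<Longrightarrow> M u j = 0"
    and G: "\<And>u j. u \<in> S - B \<Longrightarrow> j \<in> S - B \<Longrightarrow> (\<Sum>l\<in>S - B. G u l * M l j) = (if u = j then 1 else 0)"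
    and a: "a \<in> span (Y ` S)"
  shows "a - hatE a (Y ` B) \<in> span (E ` (S - B))"
proof -
  define Z where "Z u = (\<Sum>l\<in>S - B. G u l *\<^sub>R E l)" for u
  have "finite S" using assms(1) finite_subset by blast
  then obtain \<alpha> where \<alpha>: "a = (\<Sum>k\<in>S. \<alpha> k *\<^sub>R Y k)" using span_image_sum a by blast
  define p where "p = a - (\<Sum>u\<in>S - B. \<alpha> u *\<^sub>R Z u)"
  have "p = (\<Sum>k\<in>S \<inter> B. \<alpha> k *\<^sub>R Y k) + (\<Sum>u\<in>S - B. \<alpha> u *\<^sub>R (Y u - Z u))"
    unfolding p_def \<alpha> using sum.Int_Diff[OF \<open>finite S\<close>, of _ B]
    by (simp add: sum_subtractf scaleR_diff_right)
  also have "\<dots> \<in> span (Y ` B)"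
    using Y_minus_dual_in_span[OF assms(1) band G] unfolding Z_def
    by (intro span_add span_sum span_scale) (auto intro: span_base)
  finally have p: "p \<in> span (Y ` B)" .
  have "inner (Z u) (Y b) = 0" if "b \<in> B" for u b
    unfolding Z_def using assms(1,2) that by (intro inner_dual_Y_eq_0) auto
  then have "inner (a - p) (Y b) = 0" if "b \<in> B" for b
    unfolding p_def using that by (simp add: inner_sum_left)
  then have "hatE a (Y ` B) = p"
    using hatE_eqI[OF p] by blast
  then have "a - hatE a (Y ` B) = (\<Sum>u\<in>S - B. \<alpha> u *\<^sub>R Z u)"
    unfolding p_def by simp
  also have "\<dots> \<in> span (E ` (S - B))"
    unfolding Z_def by (intro span_sum span_scale span_base) auto
  finally show ?thesis .
qed

lemma residual_Y:
  assumes "U \<subseteq> {..<d}"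
    and G: "\<And>u j. u \<in> U \<Longrightarrow> j \<in> U \<Longrightarrow> (\<Sum>l\<in>U. G u l * M l j) = (if u = j then 1 else 0)"
    and u: "u \<in> U"
  shows "Y u - hatE (Y u) (Y ` ({..<d} - U)) = (\<Sum>l\<in>U. G u l *\<^sub>R E l)"
proof -
  have U: "{..<d} - ({..<d} - U) = U" by (rule double_diff[OF assms(1) subset_refl])
  have "Y u - (\<Sum>l\<in>U. G u l *\<^sub>R E l) \<in> span (Y ` ({..<d} - U))"
  proof (rule Y_minus_dual_in_span[of "{..<d}" "{..<d} - U" G u, unfolded U])
    show "M v j = 0" if "v \<in> U" "j < d" "j \<notin> {..<d} \<union> ({..<d} - U)" for v j
      using that(2,3) by simp
  qed (use G u in simp_all)
  moreover have "inner (Y u - (Y u - (\<Sum>l\<in>U. G u l *\<^sub>R E l))) s = 0"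
    if s: "s \<in> Y ` ({..<d} - U)" for s
  proof -
    obtain b where "b < d" "b \<notin> U" "s = Y b" using s by blast
    then show ?thesis using inner_dual_Y_eq_0[OF assms(1)] by simp
  qed
  ultimately have "hatE (Y u) (Y ` ({..<d} - U)) = Y u - (\<Sum>l\<in>U. G u l *\<^sub>R E l)"
    by (rule hatE_eqI)
  then show ?thesis by simp
qed

lemma cond_orth_Y:
  assumes "S \<subseteq> {..<d}" "T \<subseteq> {..<d}" "B \<subseteq> {..<d}" "S \<inter> T = {}"
    and band_S: "\<And>u j. u \<in> S - B \<Longrightarrow> j < d \<Longrightarrow> j \<notin> S \<union> B \<Longrightarrow> M u j = 0"
    and band_T: "\<And>u j. u \<in> T - B \<Longrightarrow> j < d \<Longrightarrow> j \<notin> T \<union> B \<Longrightarrow> M u j = 0"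
    and pd: "pos_def_on {..<d} M"
  shows "cond_orth (Y ` S) (Y ` T) (Y ` B)"
  unfolding cond_orth_def
proof (intro ballI)
  fix a b assume a: "a \<in> closure (span (Y ` S))" and b: "b \<in> closure (span (Y ` T))"
  have left_inverse: "\<exists>G. \<forall>u\<in>U. \<forall>j\<in>U. (\<Sum>l\<in>U. G u l * M l j) = (if u = j then 1 else 0)"
    if U: "U \<subseteq> {..<d}" for U
  proof -
    obtain G where "inverse_on U M G"
      using pos_def_on_ex_inverse_on[OF finite_subset[OF U finite_lessThan] pos_def_on_subset[OF pd U]] by blast
    then show ?thesis unfolding inverse_on_def by blast
  qed
  obtain G where G: "\<forall>u\<in>S - B. \<forall>j\<in>S - B. (\<Sum>l\<in>S - B. G u l * M l j) = (if u = j then 1 else 0)"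
    using left_inverse assms(1) by blast
  obtain H where H: "\<forall>u\<in>T - B. \<forall>j\<in>T - B. (\<Sum>l\<in>T - B. H u l * M l j) = (if u = j then 1 else 0)"
    using left_inverse assms(2) by blast
  have ra: "a - hatE a (Y ` B) \<in> span (E ` (S - B))"
    using residual_in_span_E[OF assms(1,3) band_S] G a closure_span_Y[OF assms(1)] by blast
  have rb: "b - hatE b (Y ` B) \<in> span (E ` (T - B))"
    using residual_in_span_E[OF assms(2,3) band_T] H b closure_span_Y[OF assms(2)] by blast
  have "inner (E v) x = 0" if "v \<in> T - B" "x \<in> span (E ` (S - B))" for v x
  proof (rule inner_closure_span_eq_0)
    show "x \<in> closure (span (E ` (S - B)))" using that(2) closure_subset by blast
  next
    fix z assume "z \<in> E ` (S - B)"
    then obtain u where u: "u \<in> S - B" "z = E u" by blast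
    moreover have "u < d" "v < d" using u(1) that(1) assms(1,2) by auto
    ultimately show "inner (E v) z = 0"
      using that(1) assms(4) band_T[of v u] by (auto simp: inner_E_E)
  qed
  then have "inner (a - hatE a (Y ` B)) (E v) = 0" if "v \<in> T - B" for v
    using that ra inner_commute[of "a - hatE a (Y ` B)" "E v"] by simp
  then show "inner (a - hatE a (Y ` B)) (b - hatE b (Y ` B)) = 0"
    using inner_closure_span_eq_0[OF _ subsetD[OF closure_subset rb]] by blast
qed

lemma pos_def_on_gram_Y: "pos_def_on {..<d} (\<lambda>k l. inner (Y k) (Y l))"
  unfolding pos_def_on_def
proof (intro allI impI)
  fix x :: "nat \<Rightarrow> real" assume "\<exists>k\<in>{..<d}. x k \<noteq> 0"
  then obtain k0 where k0: "k0 < d" "x k0 \<noteq> 0" by blast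
  define v where "v = (\<Sum>k<d. x k *\<^sub>R Y k)"
  have "inner v (E k0) = x k0"
    using k0 by (simp add: v_def inner_sum_left inner_Y_E if_distrib cong: if_cong)
  then have "v \<noteq> 0" using k0 by auto
  then have "inner v v > 0" by simp
  also have "inner v v = (\<Sum>k<d. \<Sum>l<d. x k * inner (Y k) (Y l) * x l)"
    unfolding v_def inner_sum_left by (simp add: inner_sum_right sum_distrib_left mult_ac)
  finally show "(\<Sum>k<d. \<Sum>l<d. x k * inner (Y k) (Y l) * x l) > 0" .
qed

lemma inner_Y_Y:
  assumes "inverse_pair d M Minv" "j < d" "k < d"
  shows "inner (Y j) (Y k) = Minv j k"
proof -
  have "\<forall>k<d. (\<Sum>l<d. M k l *\<^sub>R Y l) = E k"
    using E_expansion by simp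
  then have Y: "Y i = (\<Sum>l<d. Minv i l *\<^sub>R E l)" if "i < d" for i
    using iffD1[OF inverse_pair_solve[OF assms(1)]] that by blast
  have "inner (Y k) (Y j) = Minv j k"
    using assms(2,3) by (simp add: Y[of j] inner_sum_right inner_Y_E if_distrib cong: if_cong)
  then show ?thesis by (simp add: inner_commute)
qed

end

lemma dual_system_inverse:
  assumes Mi: "inverse_pair d M Minv"
    and gram: "\<And>k l. k < d \<Longrightarrow> l < d \<Longrightarrow> inner (E k) (E l) = M k l"
    and Y: "\<And>j. j < d \<Longrightarrow> Y j = (\<Sum>k<d. Minv j k *\<^sub>R E k)"
  shows "dual_system d M Y E"
proof
  fix j k assume jk: "j < d" "k < d"
  have "inner (Y j) (E k) = (\<Sum>l<d. Minv j l * M l k)"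
    using jk by (simp add: Y inner_sum_left gram)
  also have "\<dots> = (if j = k then 1 else 0)"
    using Mi jk unfolding inverse_pair_def by simp
  finally show "inner (Y j) (E k) = (if j = k then 1 else 0)" .
next
  fix k assume "k < d"
  have "\<forall>k<d. (\<Sum>l<d. M k l *\<^sub>R Y l) = E k"
    by (rule iffD2[OF inverse_pair_solve[OF Mi]]) (use Y in blast)
  with \<open>k < d\<close> show "E k = (\<Sum>l<d. M k l *\<^sub>R Y l)"
    by simp
qed

section \<open>Arithmetic modulo \<open>N\<close>\<close>

lemma int_add_diff_mod: "y < N \<Longrightarrow> int ((x + N - y) mod N) = (int x - int y) mod int N"
proof -
  assume "y < N"
  then have "int (x + N - y) = (int x - int y) + int N" by (simp add: of_nat_diff)
  then show ?thesis by (simp add: zmod_int)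
qed

lemma mod_eq_iff_int_dvd: "((x::nat) mod N = y mod N) \<longleftrightarrow> int N dvd int x - int y"
  by (metis of_nat_eq_iff zmod_int mod_eq_dvd_iff)

lemma add_mod_cancel_left:
  assumes "(a::nat) < N" "b < N" "(s + a) mod N = (s + b) mod N"
  shows "a = b"
proof -
  have "int N dvd int a - int b"
    using assms(3) mod_eq_iff_int_dvd[of "s + a" N "s + b"] by simp
  then have "a mod N = b mod N" using mod_eq_iff_int_dvd by blast
  then show ?thesis using assms(1,2) by simp
qed

lemma mod_shift_exists:
  fixes i j i' j' N :: nat
  assumes "i < N" "j < N" "i' < N" "j' < N" "(i + N - j) mod N = (i' + N - j') mod N"
  obtains s where "(s + i) mod N = i'" "(s + j) mod N = j'"
proof
  define s where "s = i' + N - i"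
  have "s + i = i' + N" using assms(1) unfolding s_def by simp
  then show "(s + i) mod N = i'" using assms(3) by simp
  have "int N dvd (int i' - int j') - (int i - int j)"
    using assms(5) int_add_diff_mod[OF assms(2), of i] int_add_diff_mod[OF assms(4), of i']
    by (simp add: mod_eq_dvd_iff)
  moreover have "int (s + j) - int j' = int N + ((int i' - int j') - (int i - int j))"
    using assms(1) unfolding s_def by (simp add: of_nat_diff)
  ultimately have "int N dvd int (s + j) - int j'"
    by (metis dvd_add dvd_refl)
  then show "(s + j) mod N = j'"
    using mod_eq_iff_int_dvd[of "s + j" N j'] assms(4) by simp
qed

lemma mod_add_diff_mod:
  fixes s i j N :: nat
  assumes "0 < N" "j < N"
  shows "((s + i) mod N + N - (s + j) mod N) mod N = (i + N - j) mod N"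
proof -
  have "int (((s + i) mod N + N - (s + j) mod N) mod N) = (int ((s + i) mod N) - int ((s + j) mod N)) mod int N"
    using assms(1) by (intro int_add_diff_mod) simp
  also have "\<dots> = (int i - int j) mod int N"
    by (simp add: zmod_int mod_diff_eq)
  also have "\<dots> = int ((i + N - j) mod N)"
    using assms(2) by (simp add: int_add_diff_mod)
  finally show ?thesis by (simp only: of_nat_eq_iff)
qed

definition cyc_dist :: "nat \<Rightarrow> nat \<Rightarrow> nat \<Rightarrow> nat" where
  "cyc_dist N s t = min ((s + N - t) mod N) ((t + N - s) mod N)"

lemma cyc_dist_add_mod:
  assumes "0 < N" "i < N" "j < N"
  shows "cyc_dist N ((s + i) mod N) ((s + j) mod N) = cyc_dist N i j"
  unfolding cyc_dist_def using assms by (simp add: mod_add_diff_mod)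

lemma cyc_dist_ordered:
  assumes "k < j" "j < N"
  shows "cyc_dist N k j = min (k + N - j) (j - k)"
proof -
  have "(k + N - j) mod N = k + N - j" using assms by (intro mod_less) linarith
  moreover have "j + N - k = (j - k) + N" using assms(1) by linarith
  then have "(j + N - k) mod N = (j - k) mod N" by (metis mod_add_self2)
  moreover have "(j - k) mod N = j - k" using assms(2) by (intro mod_less) linarith
  ultimately show ?thesis unfolding cyc_dist_def by (simp only:)
qed

lemma mod_add_offset: "t1 < (N::nat) \<Longrightarrow> s < N \<Longrightarrow> (t1 + (s + N - t1) mod N) mod N = s"
proof -
  assume "t1 < N" "s < N"
  have "(t1 + (s + N - t1) mod N) mod N = (t1 + (s + N - t1)) mod N" by (rule mod_add_right_eq)
  also have "t1 + (s + N - t1) = s + N" using \<open>t1 < N\<close> by simp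
  finally show ?thesis using \<open>s < N\<close> by simp
qed

text \<open>Measured from \<open>t1\<close>, the interval occupies the offsets \<open>1..L-1\<close> and the boundary the
  offsets \<open>0\<close>, \<open>L..L+n-1\<close> and \<open>N-n+1..N-1\<close>, so an exterior point has offset in \<open>L+n..N-n\<close>.\<close>

lemma offset_interval_exterior:
  assumes "1 \<le> n" "t1 < N" "t2 < N"
    and s: "s < N" "s \<notin> cyc_interval N t1 t2" "s \<notin> cyc_boundary N n t1 t2"
  defines "L \<equiv> (t2 + N - t1) mod N" and "j \<equiv> (s + N - t1) mod N"
  shows "L + n \<le> j" "j \<le> N - n"
proof -
  have "j < N" unfolding j_def using assms(2) by simp
  have s_j: "s = (t1 + j) mod N" unfolding j_def by (rule sym[OF mod_add_offset[OF assms(2) s(1)]])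
  have "j \<noteq> 0"
  proof
    assume "j = 0"
    then have "s = (t1 + N * n - 0) mod N" using s_j assms(2) by simp
    moreover have "(0::nat) < n" using assms(1) by simp
    ultimately show False using s(3) unfolding cyc_boundary_def by blast
  qed
  moreover have "\<not> (0 < j \<and> j < L)"
    using s(2) s_j unfolding cyc_interval_def L_def by auto
  moreover have "\<not> (L \<le> j \<and> j < L + n)"
  proof
    assume j: "L \<le> j \<and> j < L + n"
    then have "s = ((t1 + L) + (j - L)) mod N" using s_j by simp
    also have "\<dots> = (t2 + (j - L)) mod N"
      using mod_add_offset[OF assms(2,3)] mod_add_left_eq[of "t1 + L" N "j - L"] unfolding L_def by simp
    finally have "s = (t2 + (j - L)) mod N" .
    moreover have "j - L < n" using j by linarith
    ultimately show False using s(3) unfolding cyc_boundary_def by blast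
  qed
  moreover have "\<not> (N - n < j)"
  proof
    assume j: "N - n < j"
    obtain n' where n': "n = Suc n'" using assms(1) by (cases n) auto
    have "t1 + N * n - (N - j) = (t1 + j) + N * n'" using \<open>j < N\<close> n' by simp
    then have "s = (t1 + N * n - (N - j)) mod N" using s_j by simp
    moreover have "N - j < n" using j \<open>j < N\<close> by arith
    ultimately show False using s(3) unfolding cyc_boundary_def by blast
  qed
  ultimately show "L + n \<le> j" "j \<le> N - n" by arith+
qed

lemma cyc_dist_gt_interval_exterior:
  assumes "1 \<le> n" "t1 < N" "t2 < N"
    and t: "t \<in> cyc_interval N t1 t2"
    and s: "s < N" "s \<notin> cyc_interval N t1 t2" "s \<notin> cyc_boundary N n t1 t2"
  shows "n < cyc_dist N t s"
proof -
  define j where "j = (s + N - t1) mod N"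
  obtain k where k: "0 < k" "k < (t2 + N - t1) mod N" "t = (t1 + k) mod N"
    using t unfolding cyc_interval_def by auto
  have j: "(t2 + N - t1) mod N + n \<le> j" "j \<le> N - n" "j < N"
    using offset_interval_exterior[OF assms(1-3) s] assms(2) unfolding j_def by simp_all
  have "cyc_dist N t s = cyc_dist N k j"
    using cyc_dist_add_mod[of N k j t1] k j mod_add_offset[OF assms(2) s(1)] assms(2)
    unfolding j_def by simp
  also have "\<dots> = min (k + N - j) (j - k)"
    using k j by (intro cyc_dist_ordered) linarith+
  finally show ?thesis
    using k(1,2) j by (simp only: min_less_iff_conj) linarith
qed

section \<open>Block indices and block-circulant matrices\<close>

definition block_indices :: "nat \<Rightarrow> nat \<Rightarrow> nat set \<Rightarrow> nat set" where
  "block_indices m N T = {k. k < m * N \<and> k div m \<in> T}"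

lemma block_indices_subset: "block_indices m N T \<subseteq> {..<m * N}"
  by (auto simp: block_indices_def)

lemma index_less_mult: "t < N \<Longrightarrow> i < m \<Longrightarrow> t * m + i < m * (N::nat)"
proof -
  assume "t < N" "i < m"
  then have "t * m + i < (t + 1) * m" by simp
  also have "\<dots> \<le> N * m" using \<open>t < N\<close> by (intro mult_right_mono) auto
  finally show ?thesis by (simp add: mult.commute)
qed

lemma div_less_of_less_mult: "k < m * N \<Longrightarrow> k div m < (N::nat)"
  by (rule less_mult_imp_div_less) (simp add: mult.commute)

lemma block_indices_singleton:
  assumes "0 < m" "t < N"
  shows "block_indices m N {t} = (\<lambda>a. t * m + a) ` {..<m}"
proof
  show "block_indices m N {t} \<subseteq> (\<lambda>a. t * m + a) ` {..<m}"
  proof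
    fix k assume "k \<in> block_indices m N {t}"
    then have "k div m = t" by (simp add: block_indices_def)
    then have "k = t * m + k mod m" by (metis div_mult_mod_eq)
    moreover have "k mod m < m" using assms(1) by simp
    ultimately show "k \<in> (\<lambda>a. t * m + a) ` {..<m}" by blast
  qed
  show "(\<lambda>a. t * m + a) ` {..<m} \<subseteq> block_indices m N {t}"
    using assms index_less_mult[OF assms(2)] by (auto simp: block_indices_def)
qed

lemma block_indices_compl: "block_indices m N ({..<N} - T) = {..<m * N} - block_indices m N T"
  by (auto simp: block_indices_def dest: div_less_of_less_mult)

lemma comps_eq_image_stack:
  assumes "0 < m" "T \<subseteq> {..<N}"
  shows "comps m x T = stack m x ` block_indices m N T"
proof
  show "comps m x T \<subseteq> stack m x ` block_indices m N T"
  proof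
    fix z assume "z \<in> comps m x T"
    then obtain t i where ti: "z = x t i" "t \<in> T" "i < m" unfolding comps_def by auto
    then have "t * m + i \<in> block_indices m N T" "stack m x (t * m + i) = z"
      using assms index_less_mult[of t N i m] by (auto simp: block_indices_def stack_def)
    then show "z \<in> stack m x ` block_indices m N T" by (metis imageI)
  qed
  show "stack m x ` block_indices m N T \<subseteq> comps m x T"
  proof
    fix z assume "z \<in> stack m x ` block_indices m N T"
    then obtain k where "k div m \<in> T" "z = x (k div m) (k mod m)"
      by (auto simp: stack_def block_indices_def)
    moreover have "k mod m < m" using assms(1) by simp
    ultimately show "z \<in> comps m x T" unfolding comps_def by blast
  qed
qed

lemma banded_eq_0:
  assumes "banded m N n A" "0 < m" "k < m * N" "l < m * N"
    and "n < cyc_dist N (k div m) (l div m)"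
  shows "A k l = 0"
proof -
  have "\<forall>a<m. \<forall>b<m. A ((k div m) * m + a) ((l div m) * m + b) = 0"
    using assms(1,5) div_less_of_less_mult[OF assms(3)] div_less_of_less_mult[OF assms(4)]
    unfolding banded_def cyc_dist_def by blast
  then have "A ((k div m) * m + k mod m) ((l div m) * m + l mod m) = 0"
    by (meson assms(2) mod_less_divisor)
  then show ?thesis by simp
qed

lemma block_circulant_diag:
  assumes "block_circulant m N A" "t < N" "a < m" "b < m"
  shows "A (t * m + a) (t * m + b) = A a b"
proof -
  have "(t + N - t) mod N = (0 + N - 0) mod N" by simp
  then show ?thesis
    using assms unfolding block_circulant_def by (metis add_0 gr_implies_not0 mult_0 neq0_conv)
qed

definition block_shift :: "nat \<Rightarrow> nat \<Rightarrow> nat \<Rightarrow> nat \<Rightarrow> nat" where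
  "block_shift m N s k = ((s + k div m) mod N) * m + k mod m"

lemma block_shift_less: "0 < m \<Longrightarrow> k < m * N \<Longrightarrow> block_shift m N s k < m * N"
  unfolding block_shift_def
  by (intro index_less_mult) (auto dest: div_less_of_less_mult)

lemma block_shift_div_mod:
  assumes "0 < m"
  shows "block_shift m N s k div m = (s + k div m) mod N" "block_shift m N s k mod m = k mod m"
  using assms by (simp_all add: block_shift_def)

lemma bij_betw_block_shift:
  assumes "0 < m"
  shows "bij_betw (block_shift m N s) {..<m * N} {..<m * N}"
proof -
  have "inj_on (block_shift m N s) {..<m * N}"
  proof (rule inj_onI)
    fix k l assume k: "k \<in> {..<m * N}" and l: "l \<in> {..<m * N}"
      and eq: "block_shift m N s k = block_shift m N s l"
    then have "(s + k div m) mod N = (s + l div m) mod N" "k mod m = l mod m"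
      using block_shift_div_mod[OF assms] by metis+
    moreover have "k div m < N" "l div m < N" using k l by (auto dest: div_less_of_less_mult)
    ultimately have "k div m = l div m" "k mod m = l mod m"
      using add_mod_cancel_left by blast+
    then show "k = l" by (metis div_mult_mod_eq)
  qed
  moreover have "block_shift m N s ` {..<m * N} \<subseteq> {..<m * N}"
    using block_shift_less[OF assms] by auto
  ultimately show ?thesis
    unfolding bij_betw_def by (simp add: endo_inj_surj)
qed

lemma block_circulant_block_shift:
  assumes "0 < m" "block_circulant m N A" "k < m * N" "l < m * N"
  shows "A (block_shift m N s k) (block_shift m N s l) = A k l"
proof -
  have kl: "k div m < N" "l div m < N" using assms(3,4) by (auto dest: div_less_of_less_mult)
  then have "0 < N" by simp
  have "((s + k div m) mod N + N - (s + l div m) mod N) mod N = (k div m + N - l div m) mod N"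
    using \<open>0 < N\<close> kl by (intro mod_add_diff_mod)
  then have "A ((k div m) * m + k mod m) ((l div m) * m + l mod m)
      = A (((s + k div m) mod N) * m + k mod m) (((s + l div m) mod N) * m + l mod m)"
    using assms(1,2) kl \<open>0 < N\<close> unfolding block_circulant_def by simp
  then show ?thesis unfolding block_shift_def by simp
qed

lemma block_circulantI_block_shift:
  assumes "0 < m"
    and shift: "\<And>s k l. k < m * N \<Longrightarrow> l < m * N \<Longrightarrow> A (block_shift m N s k) (block_shift m N s l) = A k l"
  shows "block_circulant m N A"
  unfolding block_circulant_def
proof (intro allI impI)
  fix i j i' j' a b
  assume ij: "i < N" "j < N" "i' < N" "j' < N" "(i + N - j) mod N = (i' + N - j') mod N"
    and ab: "a < m" "b < m"
  obtain s where s: "(s + i) mod N = i'" "(s + j) mod N = j'"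
    using mod_shift_exists[OF ij] .
  have "block_shift m N s (i * m + a) = i' * m + a" "block_shift m N s (j * m + b) = j' * m + b"
    using ab s unfolding block_shift_def by simp_all
  then show "A (i * m + a) (j * m + b) = A (i' * m + a) (j' * m + b)"
    using shift[of "i * m + a" "j * m + b" s] index_less_mult ij ab by simp
qed

lemma inverse_pair_block_shift:
  assumes m: "0 < m" and circ: "block_circulant m N M" and inv: "inverse_pair (m * N) M Minv"
    and "k < m * N" "l < m * N"
  shows "Minv (block_shift m N s k) (block_shift m N s l) = Minv k l"
proof (rule inverse_pair_unique[OF inv _ assms(4,5)])
  let ?\<sigma> = "block_shift m N s"
  have bij: "bij_betw ?\<sigma> {..<m * N} {..<m * N}" by (rule bij_betw_block_shift[OF m])
  fix j l assume jl: "j < m * N" "l < m * N"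
  have "(\<Sum>i<m * N. M j i * Minv (?\<sigma> i) (?\<sigma> l)) = (\<Sum>i<m * N. M (?\<sigma> j) (?\<sigma> i) * Minv (?\<sigma> i) (?\<sigma> l))"
    using block_circulant_block_shift[OF m circ] jl by (intro sum.cong refl) simp
  also have "\<dots> = (\<Sum>i<m * N. M (?\<sigma> j) i * Minv i (?\<sigma> l))"
    by (rule sum.reindex_bij_betw[OF bij])
  also have "\<dots> = (if ?\<sigma> j = ?\<sigma> l then 1 else 0)"
    using inv jl block_shift_less[OF m] unfolding inverse_pair_def by blast
  also have "\<dots> = (if j = l then 1 else 0)"
    using bij jl unfolding bij_betw_def inj_on_def by auto
  finally show "(\<Sum>i<m * N. M j i * Minv (?\<sigma> i) (?\<sigma> l)) = (if j = l then 1 else 0)" .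
qed

section \<open>Processes solving \<open>M y = e\<close>\<close>

lemma reciprocal_if_dual_system:
  assumes dual: "dual_system (m * N) M (stack m y) E"
    and m: "0 < m" and n: "1 \<le> n"
    and sym: "symmetric_mat (m * N) M" and band: "banded m N n M" and pd: "pos_def_mat (m * N) M"
  shows "reciprocal m N n y"
  unfolding reciprocal_def
proof (intro allI impI)
  interpret dual_system "m * N" M "stack m y" E by (rule dual)
  fix t1 t2 assume t: "t1 < N" "t2 < N"
  define I where "I = cyc_interval N t1 t2"
  define Bd where "Bd = cyc_boundary N n t1 t2"
  let ?blk = "block_indices m N"
  have "0 < N" using t by simp
  then have sub: "I \<subseteq> {..<N}" "Bd \<subseteq> {..<N}"
    unfolding I_def Bd_def cyc_interval_def cyc_boundary_def by auto
  have far: "M u j = 0" if u: "u \<in> ?blk I - ?blk Bd" and j: "j < m * N" "j \<notin> ?blk I \<union> ?blk Bd" for u j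
  proof (rule banded_eq_0[OF band m])
    show "u < m * N" using u by (simp add: block_indices_def)
    show "n < cyc_dist N (u div m) (j div m)"
      using u j div_less_of_less_mult[OF j(1)] cyc_dist_gt_interval_exterior[OF n t]
      unfolding I_def Bd_def block_indices_def by auto
  qed (rule j(1))
  have "cond_orth (stack m y ` ?blk I) (stack m y ` ?blk ({..<N} - I)) (stack m y ` ?blk Bd)"
  proof (rule cond_orth_Y[OF block_indices_subset block_indices_subset block_indices_subset])
    show "?blk I \<inter> ?blk ({..<N} - I) = {}" by (auto simp: block_indices_def)
    show "M u j = 0" if "u \<in> ?blk ({..<N} - I) - ?blk Bd" "j < m * N" "j \<notin> ?blk ({..<N} - I) \<union> ?blk Bd"
      for u j
    proof -
      have "j \<in> ?blk I - ?blk Bd" "u \<notin> ?blk I \<union> ?blk Bd" "u < m * N"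
        using that by (auto simp: block_indices_def dest: div_less_of_less_mult)
      then have "M j u = 0" using far that(2) by blast
      then show ?thesis using sym that(2) \<open>u < m * N\<close> unfolding symmetric_mat_def by metis
    qed
    show "pos_def_on {..<m * N} M" using pd by (simp add: pos_def_mat_iff_pos_def_on)
  qed (use far in blast)
  then show "cond_orth (comps m y (cyc_interval N t1 t2)) (comps m y ({..<N} - cyc_interval N t1 t2))
      (comps m y (cyc_boundary N n t1 t2))"
    using sub comps_eq_image_stack[OF m] unfolding I_def Bd_def by (metis Diff_subset)
qed

lemma conj_d_eq:
  assumes dual: "dual_system (m * N) M (stack m y) (stack m e)"
    and m: "0 < m" and t: "t < N" and i: "i < m"
    and diag: "\<And>a b. a < m \<Longrightarrow> b < m \<Longrightarrow> M (t * m + a) (t * m + b) = D a b"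
    and left_inv: "\<And>a b. a < m \<Longrightarrow> b < m \<Longrightarrow> (\<Sum>c<m. G a c * D c b) = (if a = b then 1 else 0)"
  shows "conj_d m N y t i = (\<Sum>a<m. G i a *\<^sub>R e t a)"
proof -
  interpret dual_system "m * N" M "stack m y" "stack m e" by (rule dual)
  define U where "U = block_indices m N {t}"
  have U_eq: "U = (\<lambda>a. t * m + a) ` {..<m}"
    unfolding U_def by (rule block_indices_singleton[OF m t])
  have inj: "inj_on (\<lambda>a. t * m + a) {..<m}" by (rule inj_onI) simp
  define G' where "G' k l = G (k mod m) (l mod m)" for k l
  have G': "(\<Sum>l\<in>U. G' u l * M l j) = (if u = j then 1 else 0)" if uj: "u \<in> U" "j \<in> U" for u j
  proof -
    obtain a b where ab: "a < m" "b < m" "u = t * m + a" "j = t * m + b"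
      using uj U_eq by auto
    have "(\<Sum>l\<in>U. G' u l * M l j) = (\<Sum>c<m. G' u (t * m + c) * M (t * m + c) j)"
      unfolding U_eq by (simp add: sum.reindex[OF inj])
    also have "\<dots> = (\<Sum>c<m. G a c * D c b)"
      using ab diag by (intro sum.cong refl) (simp add: G'_def)
    also have "\<dots> = (if u = j then 1 else 0)"
      using left_inv ab by simp
    finally show ?thesis .
  qed
  have U_sub: "U \<subseteq> {..<m * N}" unfolding U_def by (rule block_indices_subset)
  have comps: "comps m y ({..<N} - {t}) = stack m y ` ({..<m * N} - U)"
    unfolding U_def comps_eq_image_stack[OF m Diff_subset] block_indices_compl ..
  have y: "stack m y (t * m + i) = y t i" using i by (simp add: stack_def)
  have "conj_d m N y t i = stack m y (t * m + i) - hatE (stack m y (t * m + i)) (stack m y ` ({..<m * N} - U))"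
    unfolding conj_d_def comps y ..
  also have "\<dots> = (\<Sum>l\<in>U. G' (t * m + i) l *\<^sub>R stack m e l)"
    using U_eq i by (intro residual_Y[OF U_sub G']) auto
  also have "\<dots> = (\<Sum>a<m. G i a *\<^sub>R e t a)"
    unfolding U_eq using i by (simp add: sum.reindex[OF inj] G'_def stack_def)
  finally show ?thesis .
qed

lemma normalized_conjugate_if_dual_system:
  assumes dual: "dual_system (m * N) M (stack m y) (stack m e)"
    and m: "0 < m" and N: "0 < N" and circ: "block_circulant m N M" and pd: "pos_def_mat (m * N) M"
  shows "normalized_conjugate m N y e"
proof -
  interpret dual_system "m * N" M "stack m y" "stack m e" by (rule dual)
  have "{..<m} \<subseteq> {..<m * N}" using N by simp
  \<comment> \<open>\<open>Delta\<close> inverts the diagonal block of \<open>M\<close>; it is the covariance of \<open>d(t) = Delta e(t)\<close>.\<close>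
  then obtain Delta where "inverse_on {..<m} M Delta"
    using pd pos_def_on_ex_inverse_on pos_def_on_subset unfolding pos_def_mat_iff_pos_def_on
    by (metis finite_lessThan)
  then have MD: "(\<Sum>c<m. M a c * Delta c b) = (if a = b then 1 else 0)"
    and DM: "(\<Sum>c<m. Delta a c * M c b) = (if a = b then 1 else 0)" if "a < m" "b < m" for a b
    using that unfolding inverse_on_def by auto
  have conj: "conj_d m N y t i = (\<Sum>a<m. Delta i a *\<^sub>R e t a)" if "t < N" "i < m" for t i
    by (rule conj_d_eq[OF dual m that]) (use block_circulant_diag[OF circ that(1)] DM in auto)
  have gram: "inner (e t a) (e t b) = M a b" if "t < N" "a < m" "b < m" for t a b
  proof -
    have "inner (e t a) (e t b) = inner (stack m e (t * m + a)) (stack m e (t * m + b))"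
      using that by (simp add: stack_def)
    also have "\<dots> = M a b"
      using that index_less_mult[OF that(1)] block_circulant_diag[OF circ] by (simp add: inner_E_E)
    finally show ?thesis .
  qed
  show ?thesis
    unfolding normalized_conjugate_def
  proof (intro exI conjI allI impI)
    show "inverse_pair m Delta M" using MD DM unfolding inverse_pair_def by simp
    fix t assume t: "t < N"
    show "Delta i j = inner (conj_d m N y t i) (conj_d m N y t j)" if ij: "i < m" "j < m" for i j
    proof -
      have "inner (conj_d m N y t i) (conj_d m N y t j)
          = inner (\<Sum>a<m. Delta j a *\<^sub>R e t a) (\<Sum>a<m. Delta i a *\<^sub>R e t a)"
        using conj t ij by (simp add: inner_commute)
      also have "\<dots> = (\<Sum>b<m. Delta i b * (\<Sum>a<m. Delta j a * inner (e t a) (e t b)))"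
        unfolding inner_sum_left inner_sum_right inner_scaleR_left inner_scaleR_right ..
      also have "\<dots> = (\<Sum>b<m. Delta i b * (if j = b then 1 else 0))"
        using gram t DM ij by (intro sum.cong refl) simp
      also have "\<dots> = Delta i j" using ij by (simp add: if_distrib cong: if_cong)
      finally show ?thesis ..
    qed
    show "e t i = (\<Sum>j<m. M i j *\<^sub>R conj_d m N y t j)" if i: "i < m" for i
    proof -
      have "(\<Sum>j<m. M i j *\<^sub>R conj_d m N y t j) = (\<Sum>j<m. M i j *\<^sub>R (\<Sum>a<m. Delta j a *\<^sub>R e t a))"
        using conj t by simp
      also have "\<dots> = (\<Sum>a<m. (\<Sum>j<m. M i j * Delta j a) *\<^sub>R e t a)"
        by (simp add: scaleR_sum_right scaleR_sum_left) (rule sum.swap)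
      also have "\<dots> = e t i" using MD i by (simp add: if_smult cong: if_cong)
      finally show ?thesis ..
    qed
  qed
qed

lemma solves_unique:
  assumes "inverse_pair (m * N) M Minv" "solves m N M y e" "solves m N M y' e" "t < N" "i < m"
  shows "y' t i = y t i"
proof -
  have "stack m z j = (\<Sum>k<m * N. Minv j k *\<^sub>R stack m e k)"
    if "solves m N M z e" "j < m * N" for z :: "nat \<Rightarrow> nat \<Rightarrow> 'a" and j
    using iffD1[OF inverse_pair_solve[OF assms(1)]] that unfolding solves_def by blast
  then have "stack m y' (t * m + i) = stack m y (t * m + i)"
    using assms index_less_mult[OF assms(4,5)] by simp
  then show ?thesis using assms(5) by (simp add: stack_def)
qed

lemma stationary_if_dual_system:
  assumes dual: "dual_system (m * N) M (stack m y) E"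
    and m: "0 < m" and circ: "block_circulant m N M" and inv: "inverse_pair (m * N) M Minv"
  shows "stationary m N y"
proof -
  interpret dual_system "m * N" M "stack m y" E by (rule dual)
  have cov: "cov m y k l = Minv k l" if "k < m * N" "l < m * N" for k l
    using inner_Y_Y[OF inv that] unfolding cov_def cross_cov_def .
  have "symmetric_mat (m * N) (cov m y)"
    unfolding symmetric_mat_def cov_def cross_cov_def by (simp add: inner_commute)
  moreover have "block_circulant m N (cov m y)"
    using block_shift_less[OF m] inverse_pair_block_shift[OF m circ inv]
    by (intro block_circulantI_block_shift[OF m]) (simp add: cov)
  ultimately show ?thesis unfolding stationary_def ..
qed

theorem theorem2:
  fixes m n N :: nat and M :: "nat \<Rightarrow> nat \<Rightarrow> real" and e :: "nat \<Rightarrow> nat \<Rightarrow> 'h::real_inner"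
  assumes "m \<ge> 1" and "n \<ge> 1" and "N > 2 * n"
    and "symmetric_mat (m*N) M" and "pos_def_mat (m*N) M"
    and "block_circulant m N M" and "banded m N n M"
    and "stationary m N e"
    and "\<forall>k<m*N. \<forall>l<m*N. cov m e k l = M k l"
  shows "\<exists>y. solves m N M y e
           \<and> (\<forall>y'. solves m N M y' e \<longrightarrow> (\<forall>t<N. \<forall>i<m. y' t i = y t i))
           \<and> full_rank m N y \<and> stationary m N y \<and> reciprocal m N n y
           \<and> (\<forall>k<m*N. \<forall>l<m*N. cross_cov m y e k l = (if k = l then 1 else 0))
           \<and> normalized_conjugate m N y e"
proof -
  have m: "0 < m" and N: "0 < N" using assms(1,3) by simp_all
  obtain Minv where Minv: "inverse_pair (m * N) M Minv"
    using pos_def_mat_ex_inverse_pair[OF assms(5)] by blast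
  define y where "y t i = (\<Sum>l<m * N. Minv (t * m + i) l *\<^sub>R stack m e l)" for t i
  have "dual_system (m * N) M (stack m y) (stack m e)"
    using assms(9) by (intro dual_system_inverse[OF Minv]) (simp_all add: y_def stack_def cov_def cross_cov_def)
  then interpret dual_system "m * N" M "stack m y" "stack m e" .
  have "solves m N M y e"
    unfolding solves_def using E_expansion by simp
  moreover have "full_rank m N y"
    using pos_def_on_gram_Y unfolding full_rank_def pos_def_mat_iff_pos_def_on cov_def cross_cov_def .
  ultimately show ?thesis
    using solves_unique[OF Minv] inner_Y_E m N assms
      stationary_if_dual_system[OF dual_system_axioms m assms(6) Minv]
      reciprocal_if_dual_system[OF dual_system_axioms m assms(2,4,7,5)]
      normalized_conjugate_if_dual_system[OF dual_system_axioms m N assms(6,5)]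
    unfolding cross_cov_def by blast
qed

end
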